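(* Let $f\in H_{d,n}$ be a centered random polynomial with $O(n+1)$-invariant distribution and let $n'\le n$ be a positive integer. Then the restriction $f'\in H_{d,n'}$ of $f$ to $\mathbb{R}^{n'+1}$ (obtained by substituting $X_{n'+1}=\cdots=X_n=0$) is $O(n'+1)$-invariant and has the same parameter, $\delta(f')=\delta(f)$. Moreover, if $f$ is Kostlan distributed, then so is $f'$.
   Context: $H_{d,n}$ is the space of homogeneous real polynomials of degree $d$ in $X_0,\ldots,X_n$, with $O(n+1)$ acting by $(gf)(X)=f(g^{-1}X)$; $f$ is $O(n+1)$-invariant if $gf$ has the same distribution as $f$ for all $g$. The parameter is $\delta(f)=\mathbb{E}(\partial_{X_k}f(q))^2/\mathbb{E}f(q)^2$ with $q=(1,0,\ldots,0)$, $1\le k\le n$ (equivalently $\mathbb{E}\|Df(x)\|^2/(n\,\mathbb{E}f(x)^2)$ for $x\in S^n$, $Df(x)$ the derivative of $f|_{S^n}$). $f=\sum_{|\alpha|=d}f_\alpha X^\alpha$ is Kostlan distributed if the coefficients $f_\alpha$ are independent centered Gaussian with variance $\frac{d!}{\alpha_0!\cdots\alpha_n!}$. *)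

theory Defs
  imports "HOL-Probability.Probability"
begin

text \<open>Homogeneous real polynomials of degree d in X_0..X_n are represented by their
coefficient vectors, indexed by exponent vectors alpha :: nat => nat with alpha i = 0
for i > n and total degree d.\<close>

definition mexps :: "nat \<Rightarrow> nat \<Rightarrow> (nat \<Rightarrow> nat) set" where
  "mexps d n = {\<alpha>. (\<forall>i. n < i \<longrightarrow> \<alpha> i = 0) \<and> (\<Sum>i\<le>n. \<alpha> i) = d}"

definition Hspace :: "nat \<Rightarrow> nat \<Rightarrow> ((nat \<Rightarrow> nat) \<Rightarrow> real) measure" where
  "Hspace d n = PiM (mexps d n) (\<lambda>_. borel)"

definition peval :: "nat \<Rightarrow> nat \<Rightarrow> ((nat \<Rightarrow> nat) \<Rightarrow> real) \<Rightarrow> (nat \<Rightarrow> real) \<Rightarrow> real" where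
  "peval d n c x = (\<Sum>\<alpha>\<in>mexps d n. c \<alpha> * (\<Prod>i\<le>n. x i ^ \<alpha> i))"

definition orth :: "nat \<Rightarrow> (nat \<Rightarrow> nat \<Rightarrow> real) \<Rightarrow> bool" where
  "orth n g \<longleftrightarrow> (\<forall>i\<le>n. \<forall>j\<le>n. (\<Sum>k\<le>n. g k i * g k j) = (if i = j then 1 else 0))"

text \<open>Action (g f)(X) = f(g^{-1} X); for orthogonal g, g^{-1} is the transpose.
 g f is the unique element of H_{d,n} with this evaluation.\<close>
definition pact :: "nat \<Rightarrow> nat \<Rightarrow> (nat \<Rightarrow> nat \<Rightarrow> real) \<Rightarrow> ((nat \<Rightarrow> nat) \<Rightarrow> real) \<Rightarrow> ((nat \<Rightarrow> nat) \<Rightarrow> real)" where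
  "pact d n g c = (THE c'. c' \<in> extensional (mexps d n) \<and>
      (\<forall>x. peval d n c' x = peval d n c (\<lambda>i. \<Sum>j\<le>n. g j i * x j)))"

definition Oinvariant :: "'w measure \<Rightarrow> nat \<Rightarrow> nat \<Rightarrow> ('w \<Rightarrow> (nat \<Rightarrow> nat) \<Rightarrow> real) \<Rightarrow> bool" where
  "Oinvariant M d n f \<longleftrightarrow> (\<forall>g. orth n g \<longrightarrow>
      distr M (Hspace d n) (\<lambda>w. pact d n g (f w)) = distr M (Hspace d n) f)"

definition centered :: "'w measure \<Rightarrow> nat \<Rightarrow> nat \<Rightarrow> ('w \<Rightarrow> (nat \<Rightarrow> nat) \<Rightarrow> real) \<Rightarrow> bool" where
  "centered M d n f \<longleftrightarrow> (\<forall>\<alpha>\<in>mexps d n. integrable M (\<lambda>w. f w \<alpha>) \<and> (\<integral>w. f w \<alpha> \<partial>M) = 0)"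

definition qpt :: "nat \<Rightarrow> real" where
  "qpt i = (if i = 0 then 1 else 0)"

definition pderiv_q :: "nat \<Rightarrow> nat \<Rightarrow> nat \<Rightarrow> ((nat \<Rightarrow> nat) \<Rightarrow> real) \<Rightarrow> real" where
  "pderiv_q d n k c = deriv (\<lambda>t. peval d n c (\<lambda>i. qpt i + (if i = k then t else 0))) 0"

definition pdelta :: "'w measure \<Rightarrow> nat \<Rightarrow> nat \<Rightarrow> nat \<Rightarrow> ('w \<Rightarrow> (nat \<Rightarrow> nat) \<Rightarrow> real) \<Rightarrow> real" where
  "pdelta M d n k f = (\<integral>w. (pderiv_q d n k (f w))\<^sup>2 \<partial>M) / (\<integral>w. (peval d n (f w) qpt)\<^sup>2 \<partial>M)"

definition kostlan_var :: "nat \<Rightarrow> nat \<Rightarrow> (nat \<Rightarrow> nat) \<Rightarrow> real" where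
  "kostlan_var d n \<alpha> = fact d / (\<Prod>i\<le>n. fact (\<alpha> i))"

definition kostlan :: "'w measure \<Rightarrow> nat \<Rightarrow> nat \<Rightarrow> ('w \<Rightarrow> (nat \<Rightarrow> nat) \<Rightarrow> real) \<Rightarrow> bool" where
  "kostlan M d n f \<longleftrightarrow> distr M (Hspace d n) f =
     PiM (mexps d n) (\<lambda>\<alpha>. density lborel (normal_density 0 (sqrt (kostlan_var d n \<alpha>))))"

text \<open>Restriction to R^{n'+1}: substitute X_{n'+1} = ... = X_n = 0.\<close>
definition prestr :: "nat \<Rightarrow> nat \<Rightarrow> ((nat \<Rightarrow> nat) \<Rightarrow> real) \<Rightarrow> ((nat \<Rightarrow> nat) \<Rightarrow> real)" where
  "prestr d n' c = restrict c (mexps d n')"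

end

theory Submission
  imports Defs
begin

text \<open>Substituting X_{n'+1} = ... = X_n = 0 keeps exactly the coefficients of the monomials in
  X_0, ..., X_{n'}. An orthogonal g of R^{n'+1} extends to diag(g, I) in O(n+1), and restriction
  intertwines the two actions, so the law of the restriction is invariant because the law of f is.
  Both f(q) and the derivative of f at q in direction e_{k'}, k' <= n', only see the polynomial on
  R^{n'+1}; invariance under the coordinate transposition (k k') shows that the numerator of delta
  does not depend on the direction k. Finally, restriction is a coordinate projection of the
  product of Gaussians, and the Kostlan variance of a monomial in X_0, ..., X_{n'} does not depend
  on the number of variables.\<close>

definition monom :: "nat \<Rightarrow> (nat \<Rightarrow> nat) \<Rightarrow> (nat \<Rightarrow> real) \<Rightarrow> real" where
  "monom n \<alpha> x = (\<Prod>i\<le>n. x i ^ \<alpha> i)"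

lemma peval_eq_monom: "peval d n c x = (\<Sum>\<alpha>\<in>mexps d n. c \<alpha> * monom n \<alpha> x)"
  by (simp add: peval_def monom_def)

lemma mexps_le_degree:
  assumes "\<alpha> \<in> mexps d n"
  shows "\<alpha> i \<le> d"
proof (cases "i \<le> n")
  case True
  then have "\<alpha> i \<le> (\<Sum>j\<le>n. \<alpha> j)" by (intro member_le_sum) auto
  with assms show ?thesis by (simp add: mexps_def)
qed (use assms in \<open>simp add: mexps_def\<close>)

lemma finite_mexps: "finite (mexps d n)"
proof (rule finite_subset)
  let ?B = "{\<alpha>. \<forall>i. (i \<in> {..n} \<longrightarrow> \<alpha> i \<in> {..d}) \<and> (i \<notin> {..n} \<longrightarrow> \<alpha> i = 0)}"
  show "finite ?B"
    by (rule finite_set_of_finite_funs) simp_all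
  show "mexps d n \<subseteq> ?B"
  proof
    fix \<alpha> assume "\<alpha> \<in> mexps d n"
    then show "\<alpha> \<in> ?B"
      using mexps_le_degree[of \<alpha> d n] by (simp add: mexps_def)
  qed
qed

lemma mexps_iff_vanishing:
  assumes "n' \<le> n"
  shows "\<alpha> \<in> mexps d n' \<longleftrightarrow> \<alpha> \<in> mexps d n \<and> (\<forall>i. n' < i \<longrightarrow> \<alpha> i = 0)"
proof -
  have "(\<Sum>i\<le>n'. \<alpha> i) = (\<Sum>i\<le>n. \<alpha> i)" if "\<forall>i. n' < i \<longrightarrow> \<alpha> i = 0"
    by (rule sum.mono_neutral_left) (use assms that in auto)
  moreover have "\<forall>i. n < i \<longrightarrow> \<alpha> i = 0" if "\<forall>i. n' < i \<longrightarrow> \<alpha> i = 0"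
    using assms that le_less_trans by blast
  ultimately show ?thesis
    unfolding mexps_def by auto
qed

lemma mexps_mono: "n' \<le> n \<Longrightarrow> mexps d n' \<subseteq> mexps d n"
  using mexps_iff_vanishing by blast

lemma mexps_diff_nonzero:
  assumes "n' \<le> n" "\<alpha> \<in> mexps d n - mexps d n'"
  shows "\<exists>i\<in>{n'<..n}. \<alpha> i \<noteq> 0"
proof -
  have \<alpha>: "\<alpha> \<in> mexps d n" "\<alpha> \<notin> mexps d n'"
    using assms(2) by auto
  then obtain i where i: "n' < i" "\<alpha> i \<noteq> 0"
    using mexps_iff_vanishing[OF assms(1)] by blast
  moreover have "i \<le> n"
  proof (rule ccontr)
    assume "\<not> i \<le> n"
    with \<alpha>(1) i(2) show False
      by (simp add: mexps_def)
  qed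
  ultimately show ?thesis
    by auto
qed

lemma peval_indicator:
  assumes "\<beta> \<in> mexps d n"
  shows "peval d n (indicator {\<beta>}) x = monom n \<beta> x"
proof -
  have "peval d n (indicator {\<beta>}) x = (\<Sum>\<alpha>\<in>mexps d n. if \<alpha> = \<beta> then monom n \<alpha> x else 0)"
    unfolding peval_eq_monom by (intro sum.cong) auto
  then show ?thesis
    using assms finite_mexps by (simp add: sum.delta')
qed

lemma peval_cong: "(\<And>i. i \<le> n \<Longrightarrow> x i = y i) \<Longrightarrow> peval d n c x = peval d n c y"
  unfolding peval_def by (intro sum.cong refl arg_cong2[where f="(*)"] prod.cong) auto

definition hpoly_fun :: "nat \<Rightarrow> nat \<Rightarrow> ((nat \<Rightarrow> real) \<Rightarrow> real) \<Rightarrow> bool" where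
  "hpoly_fun d n F \<longleftrightarrow> (\<exists>c. \<forall>x. F x = peval d n c x)"

lemma hpoly_fun_monom: "\<beta> \<in> mexps d n \<Longrightarrow> hpoly_fun d n (monom n \<beta>)"
  unfolding hpoly_fun_def by (metis peval_indicator)

lemma hpoly_fun_zero: "hpoly_fun d n (\<lambda>x. 0)"
  unfolding hpoly_fun_def peval_def by (rule exI[of _ "\<lambda>_. 0"]) simp

lemma hpoly_fun_add:
  assumes "hpoly_fun d n F" "hpoly_fun d n G"
  shows "hpoly_fun d n (\<lambda>x. F x + G x)"
proof -
  obtain a b where "\<And>x. F x = peval d n a x" "\<And>x. G x = peval d n b x"
    using assms unfolding hpoly_fun_def by blast
  then have "F x + G x = peval d n (\<lambda>\<alpha>. a \<alpha> + b \<alpha>) x" for x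
    by (simp add: peval_def distrib_right sum.distrib)
  then show ?thesis
    unfolding hpoly_fun_def by blast
qed

lemma hpoly_fun_cmult:
  assumes "hpoly_fun d n F"
  shows "hpoly_fun d n (\<lambda>x. r * F x)"
proof -
  obtain a where "\<And>x. F x = peval d n a x"
    using assms unfolding hpoly_fun_def by blast
  then have "r * F x = peval d n (\<lambda>\<alpha>. r * a \<alpha>) x" for x
    by (simp add: peval_def sum_distrib_left mult.assoc)
  then show ?thesis
    unfolding hpoly_fun_def by blast
qed

lemma hpoly_fun_sum:
  "finite S \<Longrightarrow> (\<And>s. s \<in> S \<Longrightarrow> hpoly_fun d n (F s)) \<Longrightarrow> hpoly_fun d n (\<lambda>x. \<Sum>s\<in>S. F s x)"
  by (induction S rule: finite_induct) (auto intro: hpoly_fun_add hpoly_fun_zero)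

lemma hpoly_fun_mult:
  assumes "hpoly_fun d1 n F" "hpoly_fun d2 n G"
  shows "hpoly_fun (d1 + d2) n (\<lambda>x. F x * G x)"
proof -
  obtain a b where a: "\<And>x. F x = peval d1 n a x" and b: "\<And>x. G x = peval d2 n b x"
    using assms unfolding hpoly_fun_def by blast
  have monom_add: "monom n \<alpha> x * monom n \<beta> x = monom n (\<lambda>i. \<alpha> i + \<beta> i) x" for \<alpha> \<beta> x
    by (simp add: monom_def power_add prod.distrib)
  have F_mult_G: "F x * G x = (\<Sum>\<alpha>\<in>mexps d1 n. \<Sum>\<beta>\<in>mexps d2 n.
      (a \<alpha> * b \<beta>) * monom n (\<lambda>i. \<alpha> i + \<beta> i) x)" for x
    unfolding a b peval_eq_monom sum_product monom_add[symmetric]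
    by (intro sum.cong refl) (simp add: algebra_simps)
  have summand: "hpoly_fun (d1 + d2) n (\<lambda>x. (a \<alpha> * b \<beta>) * monom n (\<lambda>i. \<alpha> i + \<beta> i) x)"
    if "\<alpha> \<in> mexps d1 n" "\<beta> \<in> mexps d2 n" for \<alpha> \<beta>
  proof (rule hpoly_fun_cmult, rule hpoly_fun_monom)
    show "(\<lambda>i. \<alpha> i + \<beta> i) \<in> mexps (d1 + d2) n"
      using that by (simp add: mexps_def sum.distrib)
  qed
  show ?thesis
    unfolding F_mult_G by (intro hpoly_fun_sum finite_mexps summand)
qed

lemma hpoly_fun_const: "hpoly_fun 0 n (\<lambda>x. r)"
proof -
  have "(\<lambda>_. 0) \<in> mexps 0 n" by (simp add: mexps_def)
  from hpoly_fun_cmult[OF hpoly_fun_monom[OF this], of r] show ?thesis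
    by (simp add: monom_def)
qed

lemma hpoly_fun_coord:
  assumes "j \<le> n"
  shows "hpoly_fun 1 n (\<lambda>x. x j)"
proof -
  let ?e = "\<lambda>i. if i = j then 1 else 0"
  have "?e \<in> mexps 1 n" using assms by (simp add: mexps_def)
  moreover have "monom n ?e = (\<lambda>x. x j)"
  proof
    fix x
    have "monom n ?e x = (\<Prod>i\<le>n. if i = j then x i else 1)"
      unfolding monom_def by (intro prod.cong) auto
    then show "monom n ?e x = x j" using assms by simp
  qed
  ultimately show ?thesis using hpoly_fun_monom[of ?e 1 n] by simp
qed

lemma hpoly_fun_power:
  assumes "hpoly_fun e n F"
  shows "hpoly_fun (k * e) n (\<lambda>x. F x ^ k)"
proof (induction k)
  case 0
  then show ?case using hpoly_fun_const[of n 1] by simp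
next
  case (Suc k)
  then show ?case using hpoly_fun_mult[OF assms Suc.IH] by simp
qed

lemma hpoly_fun_prod:
  "finite S \<Longrightarrow> (\<And>s. s \<in> S \<Longrightarrow> hpoly_fun (e s) n (F s)) \<Longrightarrow>
   hpoly_fun (\<Sum>s\<in>S. e s) n (\<lambda>x. \<Prod>s\<in>S. F s x)"
proof (induction S rule: finite_induct)
  case empty
  then show ?case using hpoly_fun_const[of n 1] by simp
next
  case (insert s S)
  then have "hpoly_fun (e s + (\<Sum>s\<in>S. e s)) n (\<lambda>x. F s x * (\<Prod>s\<in>S. F s x))"
    by (intro hpoly_fun_mult) auto
  with insert show ?case by simp
qed

definition transp_apply :: "nat \<Rightarrow> (nat \<Rightarrow> nat \<Rightarrow> real) \<Rightarrow> (nat \<Rightarrow> real) \<Rightarrow> nat \<Rightarrow> real" where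
  "transp_apply n g x = (\<lambda>i. \<Sum>j\<le>n. g j i * x j)"

lemma hpoly_fun_peval_transp_apply: "hpoly_fun d n (\<lambda>x. peval d n c (transp_apply n g x))"
proof -
  have monom_transp: "hpoly_fun d n (\<lambda>x. \<Prod>i\<le>n. transp_apply n g x i ^ \<alpha> i)"
    if "\<alpha> \<in> mexps d n" for \<alpha>
  proof -
    have "hpoly_fun (\<Sum>i\<le>n. \<alpha> i * 1) n (\<lambda>x. \<Prod>i\<le>n. transp_apply n g x i ^ \<alpha> i)"
      unfolding transp_apply_def
      by (intro hpoly_fun_prod hpoly_fun_power hpoly_fun_sum hpoly_fun_cmult hpoly_fun_coord) auto
    then show ?thesis
      using that by (simp add: mexps_def)
  qed
  show ?thesis
    unfolding peval_def by (rule hpoly_fun_sum[OF finite_mexps], rule hpoly_fun_cmult, rule monom_transp)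
qed

lemma base_expansion_inj:
  fixes a b :: "nat \<Rightarrow> nat"
  assumes "\<forall>i\<le>n. a i < B" "\<forall>i\<le>n. b i < B"
    and "(\<Sum>i\<le>n. a i * B ^ i) = (\<Sum>i\<le>n. b i * B ^ i)"
  shows "\<forall>i\<le>n. a i = b i"
  using assms
proof (induction n arbitrary: a b)
  case 0
  then show ?case by simp
next
  case (Suc n)
  have shift: "(\<Sum>i\<le>Suc n. a i * B ^ i) = a 0 + B * (\<Sum>i\<le>n. a (Suc i) * B ^ i)" for a
    unfolding sum.atMost_Suc_shift by (simp add: sum_distrib_left mult.left_commute)
  note eq = Suc.prems(3)[unfolded shift]
  have last_digit: "(x + B * y) mod B = x" if "x < B" for x y :: nat
    using that by simp
  have head: "a 0 = b 0"
    using arg_cong[OF eq, of "\<lambda>x. x mod B"] Suc.prems(1,2) by (simp add: last_digit)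
  moreover have "0 < B"
    using Suc.prems(1) by auto
  ultimately have "(\<Sum>i\<le>n. a (Suc i) * B ^ i) = (\<Sum>i\<le>n. b (Suc i) * B ^ i)"
    using eq by simp
  with Suc.prems have "\<forall>i\<le>n. a (Suc i) = b (Suc i)"
    by (intro Suc.IH) auto
  with head show ?case
    by (metis Suc_le_mono not0_implies_Suc)
qed

text \<open>Kronecker substitution: at the point x i = t ^ B ^ i with B > d, distinct exponent vectors
  of degree d give distinct powers of t, so peval becomes a univariate polynomial in t whose
  coefficients are those of c.\<close>
lemma coeff_eq_0_if_peval_eq_0:
  assumes zero: "\<And>x. peval d n c x = 0" and \<alpha>: "\<alpha> \<in> mexps d n"
  shows "c \<alpha> = 0"
proof -
  define B where "B = Suc d"
  define enc where "enc \<beta> = (\<Sum>i\<le>n. \<beta> i * B ^ i)" for \<beta> :: "nat \<Rightarrow> nat"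
  have enc_inj: "\<beta> = \<gamma>" if "\<beta> \<in> mexps d n" "\<gamma> \<in> mexps d n" "enc \<beta> = enc \<gamma>" for \<beta> \<gamma>
  proof
    fix i
    have "\<forall>i\<le>n. \<beta> i = \<gamma> i"
      using that mexps_le_degree[OF that(1)] mexps_le_degree[OF that(2)]
      by (intro base_expansion_inj[of n \<beta> B \<gamma>]) (auto simp: B_def enc_def less_Suc_eq_le)
    with that show "\<beta> i = \<gamma> i"
      by (cases "i \<le> n") (auto simp: mexps_def)
  qed
  have monom_enc: "monom n \<beta> (\<lambda>i. t ^ B ^ i) = t ^ enc \<beta>" for \<beta> and t :: real
    unfolding monom_def enc_def power_sum
    by (intro prod.cong refl) (simp add: power_mult[symmetric] mult.commute)
  define K where "K = (\<Sum>\<beta>\<in>mexps d n. enc \<beta>)"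
  have enc_le: "enc \<beta> \<le> K" if "\<beta> \<in> mexps d n" for \<beta>
    unfolding K_def using that finite_mexps by (intro member_le_sum) auto
  define a where "a k = (\<Sum>\<beta>\<in>{\<beta> \<in> mexps d n. enc \<beta> = k}. c \<beta>)" for k
  have "(\<Sum>k\<le>K. a k * t ^ k) = 0" for t :: real
  proof -
    have "(\<Sum>k\<le>K. a k * t ^ k) = (\<Sum>k\<le>K. \<Sum>\<beta>\<in>{\<beta> \<in> mexps d n. enc \<beta> = k}. c \<beta> * t ^ enc \<beta>)"
      unfolding a_def sum_distrib_right by (intro sum.cong refl) auto
    also have "\<dots> = (\<Sum>\<beta>\<in>mexps d n. c \<beta> * t ^ enc \<beta>)"
      by (rule sum.group) (auto simp: finite_mexps enc_le)
    also have "\<dots> = peval d n c (\<lambda>i. t ^ B ^ i)"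
      unfolding peval_eq_monom monom_enc ..
    finally show ?thesis using zero by simp
  qed
  then have "a (enc \<alpha>) = 0"
    using polyfun_eq_0[of a K] enc_le[OF \<alpha>] by simp
  moreover have "{\<beta> \<in> mexps d n. enc \<beta> = enc \<alpha>} = {\<alpha>}"
    using enc_inj \<alpha> by blast
  ultimately show ?thesis
    unfolding a_def by simp
qed

lemma peval_inj:
  assumes "a \<in> extensional (mexps d n)" "b \<in> extensional (mexps d n)"
    and "\<And>x. peval d n a x = peval d n b x"
  shows "a = b"
proof (rule extensionalityI[OF assms(1,2)])
  fix \<alpha> assume "\<alpha> \<in> mexps d n"
  moreover have "peval d n (\<lambda>\<alpha>. a \<alpha> - b \<alpha>) x = 0" for x
    using assms(3)[of x] by (simp add: peval_def left_diff_distrib sum_subtractf)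
  ultimately show "a \<alpha> = b \<alpha>"
    using coeff_eq_0_if_peval_eq_0[of d n "\<lambda>\<alpha>. a \<alpha> - b \<alpha>"] by simp
qed

lemma peval_restrict: "peval d n (restrict c (mexps d n)) x = peval d n c x"
  by (simp add: peval_def)

lemma pact_ex1:
  "\<exists>!c'. c' \<in> extensional (mexps d n) \<and> (\<forall>x. peval d n c' x = peval d n c (transp_apply n g x))"
proof -
  obtain c0 where c0: "\<And>x. peval d n c (transp_apply n g x) = peval d n c0 x"
    using hpoly_fun_peval_transp_apply[of d n c g] unfolding hpoly_fun_def by blast
  show ?thesis
    by (rule ex1I[of _ "restrict c0 (mexps d n)"])
      (auto simp: peval_restrict c0 intro: peval_inj)
qed

lemma pact_eq_The:
  "pact d n g c = (THE c'. c' \<in> extensional (mexps d n) \<and>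
     (\<forall>x. peval d n c' x = peval d n c (transp_apply n g x)))"
  unfolding pact_def transp_apply_def ..

lemma peval_pact: "peval d n (pact d n g c) x = peval d n c (transp_apply n g x)"
  using theI'[OF pact_ex1[of d n c g]] unfolding pact_eq_The[symmetric] by blast

lemma pact_eqI:
  "c' \<in> extensional (mexps d n) \<Longrightarrow> (\<And>x. peval d n c' x = peval d n c (transp_apply n g x)) \<Longrightarrow>
   pact d n g c = c'"
  unfolding pact_eq_The by (rule the1_equality[OF pact_ex1]) auto

lemma pact_eq_sum_basis:
  assumes "c \<in> extensional (mexps d n)"
  shows "pact d n g c =
    restrict (\<lambda>\<alpha>. \<Sum>\<beta>\<in>mexps d n. c \<beta> * pact d n g (indicator {\<beta>}) \<alpha>) (mexps d n)"
proof (rule pact_eqI)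
  fix x
  have "peval d n (\<lambda>\<alpha>. \<Sum>\<beta>\<in>mexps d n. c \<beta> * pact d n g (indicator {\<beta>}) \<alpha>) x
      = (\<Sum>\<beta>\<in>mexps d n. c \<beta> * peval d n (pact d n g (indicator {\<beta>})) x)"
    unfolding peval_def sum_distrib_left sum_distrib_right
    by (subst sum.swap) (simp add: mult.assoc)
  also have "\<dots> = (\<Sum>\<beta>\<in>mexps d n. c \<beta> * monom n \<beta> (transp_apply n g x))"
    by (intro sum.cong refl) (simp add: peval_pact peval_indicator)
  also have "\<dots> = peval d n c (transp_apply n g x)"
    by (simp add: peval_eq_monom)
  finally show "peval d n (restrict (\<lambda>\<alpha>. \<Sum>\<beta>\<in>mexps d n. c \<beta> * pact d n g (indicator {\<beta>}) \<alpha>)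
      (mexps d n)) x = peval d n c (transp_apply n g x)"
    by (simp add: peval_restrict)
qed simp

lemma borel_measurable_linear_coeffs:
  "(\<lambda>c. \<Sum>\<alpha>\<in>mexps d n. c \<alpha> * K \<alpha>) \<in> borel_measurable (Hspace d n)"
  unfolding Hspace_def
  by (intro borel_measurable_sum borel_measurable_times measurable_component_singleton
      borel_measurable_const)

lemma space_Hspace: "space (Hspace d n) = PiE (mexps d n) (\<lambda>_. UNIV)"
  by (simp add: Hspace_def space_PiM)

lemma measurable_pact: "pact d n g \<in> measurable (Hspace d n) (Hspace d n)"
proof (rule measurable_cong[THEN iffD2])
  show "pact d n g c =
    restrict (\<lambda>\<alpha>. \<Sum>\<beta>\<in>mexps d n. c \<beta> * pact d n g (indicator {\<beta>}) \<alpha>) (mexps d n)"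
    if "c \<in> space (Hspace d n)" for c
    using that by (intro pact_eq_sum_basis) (simp add: space_Hspace PiE_def)
  show "(\<lambda>c. restrict (\<lambda>\<alpha>. \<Sum>\<beta>\<in>mexps d n. c \<beta> * pact d n g (indicator {\<beta>}) \<alpha>) (mexps d n))
      \<in> measurable (Hspace d n) (Hspace d n)"
    unfolding Hspace_def
    by (intro measurable_restrict borel_measurable_linear_coeffs[unfolded Hspace_def])
qed

lemma distr_prestr:
  assumes "f \<in> measurable M (Hspace d n)" and "n' \<le> n"
  shows "distr M (Hspace d n') (\<lambda>w. prestr d n' (f w)) =
    distr (distr M (Hspace d n) f) (Hspace d n') (prestr d n')"
proof -
  have "prestr d n' \<in> measurable (Hspace d n) (Hspace d n')"
    unfolding prestr_def[abs_def] Hspace_def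
    using assms(2) by (rule measurable_restrict_subset[OF mexps_mono])
  with assms(1) show ?thesis
    by (simp add: distr_distr o_def)
qed

definition trunc :: "nat \<Rightarrow> (nat \<Rightarrow> real) \<Rightarrow> nat \<Rightarrow> real" where
  "trunc n' x = (\<lambda>i. if i \<le> n' then x i else 0)"

lemma peval_trunc: "peval d n' c (trunc n' x) = peval d n' c x"
  by (rule peval_cong) (simp add: trunc_def)

lemma peval_prestr:
  assumes le: "n' \<le> n" and vanish: "\<And>i. n' < i \<Longrightarrow> x i = 0"
  shows "peval d n' (prestr d n' c) x = peval d n c x"
proof -
  have "monom n \<alpha> x = 0" if \<alpha>: "\<alpha> \<in> mexps d n - mexps d n'" for \<alpha>
  proof -
    obtain i where "i \<in> {n'<..n}" "\<alpha> i \<noteq> 0"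
      using mexps_diff_nonzero[OF le \<alpha>] by blast
    then show ?thesis
      unfolding monom_def using vanish by (intro prod_zero bexI[of _ i]) auto
  qed
  then have "peval d n c x = (\<Sum>\<alpha>\<in>mexps d n'. c \<alpha> * monom n \<alpha> x)"
    unfolding peval_eq_monom
    by (intro sum.mono_neutral_right finite_mexps mexps_mono le) simp
  also have "\<dots> = peval d n' (prestr d n' c) x"
  proof -
    have "monom n \<alpha> x = monom n' \<alpha> x" if "\<alpha> \<in> mexps d n'" for \<alpha>
      unfolding monom_def
      by (rule prod.mono_neutral_right) (use le that in \<open>auto simp: mexps_def\<close>)
    then show ?thesis
      unfolding peval_eq_monom prestr_def by (intro sum.cong) auto
  qed
  finally show ?thesis ..
qed

definition mat_extend :: "nat \<Rightarrow> (nat \<Rightarrow> nat \<Rightarrow> real) \<Rightarrow> nat \<Rightarrow> nat \<Rightarrow> real" where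
  "mat_extend n' g = (\<lambda>k i. if k \<le> n' \<and> i \<le> n' then g k i else if k = i then 1 else 0)"

lemma transp_apply_mat_extend:
  assumes "n' \<le> n"
  shows "transp_apply n (mat_extend n' g) (trunc n' x) = trunc n' (transp_apply n' g x)"
proof
  fix i
  have "transp_apply n (mat_extend n' g) (trunc n' x) i =
      (\<Sum>j\<in>{..n} \<inter> {..n'}. if i \<le> n' then g j i * x j else 0)"
    unfolding transp_apply_def sum.inter_restrict[OF finite_atMost]
    by (intro sum.cong) (auto simp: mat_extend_def trunc_def)
  also have "{..n} \<inter> {..n'} = {..n'}"
    using assms by auto
  finally show "transp_apply n (mat_extend n' g) (trunc n' x) i = trunc n' (transp_apply n' g x) i"
    by (simp add: trunc_def transp_apply_def)
qed

lemma orth_mat_extend: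
  assumes le: "n' \<le> n" and g: "orth n' g"
  shows "orth n (mat_extend n' g)"
  unfolding orth_def
proof (intro allI impI)
  fix i j assume i: "i \<le> n" and j: "j \<le> n"
  let ?e = "mat_extend n' g"
  have "{..n} = {..n'} \<union> {n'<..n}"
    using le by auto
  then have split: "(\<Sum>k\<le>n. ?e k i * ?e k j) =
      (\<Sum>k\<le>n'. ?e k i * ?e k j) + (\<Sum>k\<in>{n'<..n}. ?e k i * ?e k j)"
    by (simp only:) (rule sum.union_disjoint; auto)
  show "(\<Sum>k\<le>n. ?e k i * ?e k j) = (if i = j then 1 else 0)"
  proof (cases "i \<le> n' \<and> j \<le> n'")
    case True
    then have "(\<Sum>k\<le>n'. ?e k i * ?e k j) = (\<Sum>k\<le>n'. g k i * g k j)"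
      by (intro sum.cong) (auto simp: mat_extend_def)
    moreover have "(\<Sum>k\<in>{n'<..n}. ?e k i * ?e k j) = 0"
      using True by (intro sum.neutral) (auto simp: mat_extend_def)
    ultimately show ?thesis
      using split g True unfolding orth_def by simp
  next
    case False
    then have "(\<Sum>k\<le>n'. ?e k i * ?e k j) = 0"
      by (intro sum.neutral) (auto simp: mat_extend_def)
    moreover have "(\<Sum>k\<in>{n'<..n}. ?e k i * ?e k j) =
        (\<Sum>k\<in>{n'<..n}. if k = i then (if i = j then 1 else 0) else 0)"
      using False by (intro sum.cong) (auto simp: mat_extend_def)
    ultimately show ?thesis
      using split False i j by (auto simp: sum.delta')
  qed
qed

lemma pact_prestr:
  assumes le: "n' \<le> n"
  shows "pact d n' g (prestr d n' c) = prestr d n' (pact d n (mat_extend n' g) c)"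
proof (rule pact_eqI)
  show "prestr d n' (pact d n (mat_extend n' g) c) \<in> extensional (mexps d n')"
    by (simp add: prestr_def)
  have vanish: "n' < i \<Longrightarrow> trunc n' y i = 0" for y i
    by (simp add: trunc_def)
  fix x
  have "peval d n' (prestr d n' (pact d n (mat_extend n' g) c)) x
      = peval d n (pact d n (mat_extend n' g) c) (trunc n' x)"
    by (simp add: peval_prestr[OF le vanish] flip: peval_trunc[of _ _ _ x])
  also have "\<dots> = peval d n c (trunc n' (transp_apply n' g x))"
    by (simp add: peval_pact transp_apply_mat_extend[OF le])
  also have "\<dots> = peval d n' (prestr d n' c) (transp_apply n' g x)"
    by (simp add: peval_prestr[OF le vanish, symmetric] peval_trunc)
  finally show "peval d n' (prestr d n' (pact d n (mat_extend n' g) c)) x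
      = peval d n' (prestr d n' c) (transp_apply n' g x)" .
qed

lemma Oinvariant_prestr:
  assumes f: "f \<in> measurable M (Hspace d n)" and inv: "Oinvariant M d n f" and le: "n' \<le> n"
  shows "Oinvariant M d n' (\<lambda>w. prestr d n' (f w))"
  unfolding Oinvariant_def
proof (intro allI impI)
  fix g assume "orth n' g"
  then have inv_ext: "distr M (Hspace d n) (\<lambda>w. pact d n (mat_extend n' g) (f w)) =
      distr M (Hspace d n) f"
    using inv orth_mat_extend[OF le] unfolding Oinvariant_def by blast
  have meas_ext: "(\<lambda>w. pact d n (mat_extend n' g) (f w)) \<in> measurable M (Hspace d n)"
    using measurable_compose[OF f measurable_pact] .
  have "distr M (Hspace d n') (\<lambda>w. pact d n' g (prestr d n' (f w))) =
      distr M (Hspace d n') (\<lambda>w. prestr d n' (pact d n (mat_extend n' g) (f w)))"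
    by (simp add: pact_prestr[OF le])
  also have "\<dots> = distr (distr M (Hspace d n) f) (Hspace d n') (prestr d n')"
    unfolding distr_prestr[OF meas_ext le] inv_ext ..
  also have "\<dots> = distr M (Hspace d n') (\<lambda>w. prestr d n' (f w))"
    by (rule distr_prestr[OF f le, symmetric])
  finally show "distr M (Hspace d n') (\<lambda>w. pact d n' g (prestr d n' (f w))) =
      distr M (Hspace d n') (\<lambda>w. prestr d n' (f w))" .
qed

definition qline :: "nat \<Rightarrow> real \<Rightarrow> nat \<Rightarrow> real" where
  "qline k t = (\<lambda>i. qpt i + (if i = k then t else 0))"

lemma pderiv_q_qline: "pderiv_q d n k c = deriv (\<lambda>t. peval d n c (qline k t)) 0"
  by (simp add: pderiv_q_def qline_def)

lemma monom_qline_differentiable: "(\<lambda>t. monom n \<alpha> (qline k t)) field_differentiable at t0"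
proof -
  have "((\<lambda>t. qline k t i ^ \<alpha> i) has_field_derivative
      (if i = k then of_nat (\<alpha> i) * qline k t0 i ^ (\<alpha> i - 1) else 0)) (at t0)" for i
    unfolding qline_def by (auto intro!: derivative_eq_intros)
  from has_field_derivative_prod[of "{..n}" "\<lambda>i t. qline k t i ^ \<alpha> i", OF this]
  show ?thesis
    unfolding monom_def field_differentiable_def by blast
qed

lemma pderiv_q_eq_sum:
  "pderiv_q d n k c = (\<Sum>\<alpha>\<in>mexps d n. c \<alpha> * deriv (\<lambda>t. monom n \<alpha> (qline k t)) 0)"
  unfolding pderiv_q_qline peval_eq_monom
  by (simp add: monom_qline_differentiable field_differentiable_mult)

lemma borel_measurable_pderiv_q: "pderiv_q d n k \<in> borel_measurable (Hspace d n)"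
  unfolding pderiv_q_eq_sum[abs_def] by (rule borel_measurable_linear_coeffs)

definition perm_mat :: "(nat \<Rightarrow> nat) \<Rightarrow> nat \<Rightarrow> nat \<Rightarrow> real" where
  "perm_mat p = (\<lambda>a b. if a = p b then 1 else 0)"

lemma orth_perm_mat:
  assumes "p permutes {..n}"
  shows "orth n (perm_mat p)"
  unfolding orth_def
proof (intro allI impI)
  fix i j assume "i \<le> n" "j \<le> n"
  have "(\<Sum>a\<le>n. perm_mat p a i * perm_mat p a j) =
      (\<Sum>a\<le>n. if a = p i then of_bool (i = j) else 0)"
    using permutes_inj[OF assms] by (intro sum.cong) (auto simp: perm_mat_def inj_eq)
  also have "\<dots> = (if i = j then 1 else 0)"
    using permutes_in_image[OF assms] \<open>i \<le> n\<close> by simp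
  finally show "(\<Sum>a\<le>n. perm_mat p a i * perm_mat p a j) = (if i = j then 1 else 0)" .
qed

lemma transp_apply_perm_mat:
  assumes "p permutes {..n}" and "i \<le> n"
  shows "transp_apply n (perm_mat p) y i = y (p i)"
proof -
  have "transp_apply n (perm_mat p) y i = (\<Sum>j\<le>n. if j = p i then y j else 0)"
    unfolding transp_apply_def perm_mat_def by (intro sum.cong) auto
  then show ?thesis
    using permutes_in_image[OF assms(1)] assms(2) by simp
qed

lemma pderiv_q_pact_transpose:
  assumes "k \<in> {1..n}" "k' \<in> {1..n}"
  shows "pderiv_q d n k (pact d n (perm_mat (Transposition.transpose k k')) c) = pderiv_q d n k' c"
proof -
  have perm: "Transposition.transpose k k' permutes {..n}"
    using assms by (intro permutes_swap_id) auto
  have "peval d n (pact d n (perm_mat (Transposition.transpose k k')) c) (qline k t) =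
      peval d n c (qline k' t)" for t
    unfolding peval_pact
  proof (rule peval_cong)
    fix i assume "i \<le> n"
    then show "transp_apply n (perm_mat (Transposition.transpose k k')) (qline k t) i = qline k' t i"
      using assms by (auto simp: transp_apply_perm_mat[OF perm] qline_def qpt_def Transposition.transpose_def)
  qed
  then show ?thesis
    unfolding pderiv_q_qline by simp
qed

lemma integral_pact_eq:
  assumes "Oinvariant M d n f" "orth n g" "f \<in> measurable M (Hspace d n)"
    and h: "h \<in> borel_measurable (Hspace d n)"
  shows "(\<integral>w. h (pact d n g (f w)) \<partial>M) = (\<integral>w. (h (f w) :: real) \<partial>M)"
proof -
  have "(\<lambda>w. pact d n g (f w)) \<in> measurable M (Hspace d n)"
    using measurable_compose[OF assms(3) measurable_pact] .
  then have "(\<integral>w. h (pact d n g (f w)) \<partial>M) = integral\<^sup>L (distr M (Hspace d n) (\<lambda>w. pact d n g (f w))) h"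
    using h by (simp add: integral_distr)
  also have "\<dots> = integral\<^sup>L (distr M (Hspace d n) f) h"
    using assms(1,2) unfolding Oinvariant_def by simp
  also have "\<dots> = (\<integral>w. h (f w) \<partial>M)"
    using assms(3) h by (simp add: integral_distr)
  finally show ?thesis .
qed

lemma integral_pderiv_q_sq_indep:
  assumes "f \<in> measurable M (Hspace d n)" "Oinvariant M d n f" "k \<in> {1..n}" "k' \<in> {1..n}"
  shows "(\<integral>w. (pderiv_q d n k' (f w))\<^sup>2 \<partial>M) = (\<integral>w. (pderiv_q d n k (f w))\<^sup>2 \<partial>M)"
proof -
  have "orth n (perm_mat (Transposition.transpose k k'))"
    using assms(3,4) by (intro orth_perm_mat permutes_swap_id) auto
  then have "(\<integral>w. (pderiv_q d n k (pact d n (perm_mat (Transposition.transpose k k')) (f w)))\<^sup>2 \<partial>M) =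
      (\<integral>w. (pderiv_q d n k (f w))\<^sup>2 \<partial>M)"
    using assms(1,2) borel_measurable_pderiv_q by (intro integral_pact_eq) auto
  then show ?thesis
    unfolding pderiv_q_pact_transpose[OF assms(3,4)] .
qed

lemma pderiv_q_prestr:
  assumes "n' \<le> n" "k \<le> n'"
  shows "pderiv_q d n' k (prestr d n' c) = pderiv_q d n k c"
proof -
  have "peval d n' (prestr d n' c) (qline k t) = peval d n c (qline k t)" for t
    using assms by (intro peval_prestr) (auto simp: qline_def qpt_def)
  then show ?thesis
    unfolding pderiv_q_qline by simp
qed

lemma peval_qpt_prestr: "n' \<le> n \<Longrightarrow> peval d n' (prestr d n' c) qpt = peval d n c qpt"
  by (intro peval_prestr) (auto simp: qpt_def)

lemma pdelta_prestr:
  assumes "f \<in> measurable M (Hspace d n)" "Oinvariant M d n f" "n' \<le> n"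
    and "k \<in> {1..n}" "k' \<in> {1..n'}"
  shows "pdelta M d n' k' (\<lambda>w. prestr d n' (f w)) = pdelta M d n k f"
proof -
  have "k' \<le> n'" "k' \<in> {1..n}"
    using assms(3,5) by auto
  show ?thesis
    unfolding pdelta_def pderiv_q_prestr[OF assms(3) \<open>k' \<le> n'\<close>] peval_qpt_prestr[OF assms(3)]
      integral_pderiv_q_sq_indep[OF assms(1,2,4) \<open>k' \<in> {1..n}\<close>] ..
qed

lemma kostlan_var_pos: "0 < kostlan_var d n \<alpha>"
  unfolding kostlan_var_def by (intro divide_pos_pos prod_pos) auto

lemma kostlan_var_prestr:
  assumes "n' \<le> n" "\<alpha> \<in> mexps d n'"
  shows "kostlan_var d n \<alpha> = kostlan_var d n' \<alpha>"
proof -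
  have "(\<Prod>i\<le>n'. fact (\<alpha> i)) = (\<Prod>i\<le>n. fact (\<alpha> i) :: real)"
    by (rule prod.mono_neutral_left) (use assms in \<open>auto simp: mexps_def\<close>)
  then show ?thesis
    by (simp add: kostlan_var_def)
qed

lemma kostlan_prestr:
  assumes f: "f \<in> measurable M (Hspace d n)" and "kostlan M d n f" and le: "n' \<le> n"
  shows "kostlan M d n' (\<lambda>w. prestr d n' (f w))"
proof -
  define N where "N m \<alpha> = density lborel (normal_density 0 (sqrt (kostlan_var d m \<alpha>)))" for m \<alpha>
  interpret product_prob_space "N n" UNIV
    unfolding N_def
    by (intro product_prob_space.intro product_sigma_finite.intro product_prob_space_axioms.intro
        prob_space_imp_sigma_finite prob_space_normal_density) (simp_all add: kostlan_var_pos)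
  have "distr M (Hspace d n') (\<lambda>w. prestr d n' (f w)) =
      distr (distr M (Hspace d n) f) (Hspace d n') (prestr d n')"
    by (rule distr_prestr[OF f le])
  also have "\<dots> = distr (PiM (mexps d n) (N n)) (Hspace d n') (\<lambda>c. restrict c (mexps d n'))"
    using assms(2) unfolding kostlan_def N_def prestr_def[abs_def] by simp
  also have "\<dots> = distr (PiM (mexps d n) (N n)) (PiM (mexps d n') (N n)) (\<lambda>c. restrict c (mexps d n'))"
    by (rule distr_cong) (auto simp: Hspace_def N_def intro!: sets_PiM_cong)
  also have "\<dots> = PiM (mexps d n') (N n)"
    by (rule distr_restrict[symmetric, OF mexps_mono[OF le] finite_mexps])
  also have "\<dots> = PiM (mexps d n') (N n')"
    by (rule PiM_cong) (auto simp: N_def kostlan_var_prestr[OF le])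
  finally show ?thesis
    unfolding kostlan_def N_def .
qed

theorem lemma4p7:
  fixes M :: "'w measure" and f :: "'w \<Rightarrow> (nat \<Rightarrow> nat) \<Rightarrow> real" and d n n' :: nat
  assumes "prob_space M"
    and "f \<in> measurable M (Hspace d n)"
    and "centered M d n f"
    and "Oinvariant M d n f"
    and "1 \<le> n'" and "n' \<le> n"
  shows "Oinvariant M d n' (\<lambda>w. prestr d n' (f w)) \<and>
     (\<forall>k\<in>{1..n}. \<forall>k'\<in>{1..n'}. pdelta M d n' k' (\<lambda>w. prestr d n' (f w)) = pdelta M d n k f) \<and>
     (kostlan M d n f \<longrightarrow> kostlan M d n' (\<lambda>w. prestr d n' (f w)))"
  using Oinvariant_prestr[OF assms(2,4,6)] pdelta_prestr[OF assms(2,4,6)]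
    kostlan_prestr[OF assms(2) _ assms(6)]
  by blast

end
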